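(* Let $A$ be a superring and $S\subseteq A$ a Marshall coherent subset with $0\notin S$. Then: (i) if $A$ is full, $A/_mS$ is full; (ii) if $A$ is a superdomain, $A/_mS$ is a superdomain; (iii) if $A$ is a superfield, $A/_mS$ is a superfield.
   Context: Multivalued operations are extended to subsets by unions. A superring is a structure $(S,+,\cdot,-,0,1)$ with multivalued addition and multiplication such that $(S,+,-,0)$ is a commutative multigroup, $(S,\cdot,1)$ is a commutative multimonoid, $a\cdot0=\{0\}$, $c(a+b)\subseteq ca+cb$, and $-(ab)=(-a)b=a(-b)$ (multigroup axioms: $c\in ab\Rightarrow a\in c\,r(b)$ and $b\in r(a)c$; $b\in a\cdot1\iff a=b$; $(ab)c\subseteq a(bc)$; $ab=ba$; multimonoid: the last two and $a\in 1\cdot a$). It is full if $c(a+b)=ca+cb$ for all $a,b,c$. A superdomain is a nontrivial superring in which $0\in ab$ iff $a=0$ or $b=0$; a superfield is a superdomain in which every $a\ne0$ has some $b$ with $1\in ab$. A subset $S$ of a superring $A$ is Marshall coherent if it is multiplicative ($1\in S$, $S\cdot S\subseteq S$) and whenever $x,a\in A$ and $x\in as$ for some $s\in S$, there are $P,Q\subseteq S$ with $xP=aQ$. For $a,b\in A$, $a\sim_S b$ iff there are nonempty $X,Y\subseteq S$ with $aX=bY$. The Marshall quotient $A/_mS$ is the set of $\sim_S$-classes $[a]$ with: $[c]\in[a]+[b]$ iff there exist $c'\sim c$, $a'\sim a$, $b'\sim b$ with $c'\in a'+b'$; $[c]\in[a][b]$ iff there exist $c'\sim c,a'\sim a,b'\sim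 b$ with $c'\in a'b'$; $-[a]:=[-a]$; zero $[0]$, unit $[1]$. *)

theory Defs
  imports Main
begin

record 'a sr_struct =
  sr_carrier :: "'a set"
  sr_add :: "'a \<Rightarrow> 'a \<Rightarrow> 'a set"
  sr_mul :: "'a \<Rightarrow> 'a \<Rightarrow> 'a set"
  sr_neg :: "'a \<Rightarrow> 'a"
  sr_zero :: 'a
  sr_one :: 'a

definition set_add :: "('a, 'b) sr_struct_scheme \<Rightarrow> 'a set \<Rightarrow> 'a set \<Rightarrow> 'a set" where
  "set_add R X Y = (\<Union>x\<in>X. \<Union>y\<in>Y. sr_add R x y)"

definition set_mul :: "('a, 'b) sr_struct_scheme \<Rightarrow> 'a set \<Rightarrow> 'a set \<Rightarrow> 'a set" where
  "set_mul R X Y = (\<Union>x\<in>X. \<Union>y\<in>Y. sr_mul R x y)"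

definition superring :: "('a, 'b) sr_struct_scheme \<Rightarrow> bool" where
  "superring R \<longleftrightarrow>
     (let C = sr_carrier R in
      sr_zero R \<in> C \<and> sr_one R \<in> C \<and>
      (\<forall>a\<in>C. sr_neg R a \<in> C) \<and>
      (\<forall>a\<in>C. \<forall>b\<in>C. sr_add R a b \<subseteq> C \<and> sr_mul R a b \<subseteq> C) \<and>
      \<comment> \<open>(C,+,-,0) is a commutative multigroup\<close>
      (\<forall>a\<in>C. \<forall>b\<in>C. \<forall>c\<in>C. c \<in> sr_add R a b \<longrightarrow>
          a \<in> sr_add R c (sr_neg R b) \<and> b \<in> sr_add R (sr_neg R a) c) \<and>
      (\<forall>a\<in>C. \<forall>b\<in>C. b \<in> sr_add R a (sr_zero R) \<longleftrightarrow> a = b) \<and>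
      (\<forall>a\<in>C. \<forall>b\<in>C. \<forall>c\<in>C.
          set_add R (sr_add R a b) {c} \<subseteq> set_add R {a} (sr_add R b c)) \<and>
      (\<forall>a\<in>C. \<forall>b\<in>C. sr_add R a b = sr_add R b a) \<and>
      \<comment> \<open>(C,*,1) is a commutative multimonoid\<close>
      (\<forall>a\<in>C. \<forall>b\<in>C. \<forall>c\<in>C.
          set_mul R (sr_mul R a b) {c} \<subseteq> set_mul R {a} (sr_mul R b c)) \<and>
      (\<forall>a\<in>C. \<forall>b\<in>C. sr_mul R a b = sr_mul R b a) \<and>
      (\<forall>a\<in>C. a \<in> sr_mul R (sr_one R) a) \<and>
      \<comment> \<open>remaining superring axioms\<close>
      (\<forall>a\<in>C. sr_mul R a (sr_zero R) = {sr_zero R}) \<and>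
      (\<forall>a\<in>C. \<forall>b\<in>C. \<forall>c\<in>C.
          set_mul R {c} (sr_add R a b) \<subseteq> set_add R (sr_mul R c a) (sr_mul R c b)) \<and>
      (\<forall>a\<in>C. \<forall>b\<in>C. sr_neg R ` sr_mul R a b = sr_mul R (sr_neg R a) b \<and>
          sr_mul R (sr_neg R a) b = sr_mul R a (sr_neg R b)))"

definition full_superring :: "('a, 'b) sr_struct_scheme \<Rightarrow> bool" where
  "full_superring R \<longleftrightarrow> superring R \<and>
     (\<forall>a\<in>sr_carrier R. \<forall>b\<in>sr_carrier R. \<forall>c\<in>sr_carrier R.
        set_mul R {c} (sr_add R a b) = set_add R (sr_mul R c a) (sr_mul R c b))"

definition superdomain :: "('a, 'b) sr_struct_scheme \<Rightarrow> bool" where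
  "superdomain R \<longleftrightarrow> superring R \<and> sr_carrier R \<noteq> {sr_zero R} \<and>
     (\<forall>a\<in>sr_carrier R. \<forall>b\<in>sr_carrier R.
        sr_zero R \<in> sr_mul R a b \<longleftrightarrow> a = sr_zero R \<or> b = sr_zero R)"

definition superfield :: "('a, 'b) sr_struct_scheme \<Rightarrow> bool" where
  "superfield R \<longleftrightarrow> superdomain R \<and>
     (\<forall>a\<in>sr_carrier R. a \<noteq> sr_zero R \<longrightarrow> (\<exists>b\<in>sr_carrier R. sr_one R \<in> sr_mul R a b))"

definition marshall_coherent :: "('a, 'b) sr_struct_scheme \<Rightarrow> 'a set \<Rightarrow> bool" where
  "marshall_coherent R S \<longleftrightarrow>
     S \<subseteq> sr_carrier R \<and> sr_one R \<in> S \<and> set_mul R S S \<subseteq> S \<and>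
     (\<forall>x\<in>sr_carrier R. \<forall>a\<in>sr_carrier R. (\<exists>s\<in>S. x \<in> sr_mul R a s) \<longrightarrow>
        (\<exists>P Q. P \<subseteq> S \<and> Q \<subseteq> S \<and> P \<noteq> {} \<and> Q \<noteq> {} \<and>
               set_mul R {x} P = set_mul R {a} Q))"

definition msim :: "('a, 'b) sr_struct_scheme \<Rightarrow> 'a set \<Rightarrow> 'a \<Rightarrow> 'a \<Rightarrow> bool" where
  "msim R S a b \<longleftrightarrow> a \<in> sr_carrier R \<and> b \<in> sr_carrier R \<and>
     (\<exists>X Y. X \<noteq> {} \<and> Y \<noteq> {} \<and> X \<subseteq> S \<and> Y \<subseteq> S \<and>
            set_mul R {a} X = set_mul R {b} Y)"

definition mclass :: "('a, 'b) sr_struct_scheme \<Rightarrow> 'a set \<Rightarrow> 'a \<Rightarrow> 'a set" where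
  "mclass R S a = {b \<in> sr_carrier R. msim R S b a}"

definition marshall_quotient :: "('a, 'b) sr_struct_scheme \<Rightarrow> 'a set \<Rightarrow> 'a set sr_struct" where
  "marshall_quotient R S =
     (let C = sr_carrier R; cl = mclass R S; sim = msim R S in
     \<lparr> sr_carrier = cl ` C,
       sr_add = (\<lambda>U V. {W \<in> cl ` C. \<exists>a\<in>C. \<exists>b\<in>C. \<exists>c\<in>C.
                   U = cl a \<and> V = cl b \<and> W = cl c \<and>
                   (\<exists>a' b' c'. sim c' c \<and> sim a' a \<and> sim b' b \<and> c' \<in> sr_add R a' b')}),
       sr_mul = (\<lambda>U V. {W \<in> cl ` C. \<exists>a\<in>C. \<exists>b\<in>C. \<exists>c\<in>C.
                   U = cl a \<and> V = cl b \<and> W = cl c \<and>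
                   (\<exists>a' b' c'. sim c' c \<and> sim a' a \<and> sim b' b \<and> c' \<in> sr_mul R a' b')}),
       sr_neg = (\<lambda>U. cl (sr_neg R (SOME a. a \<in> C \<and> U = cl a))),
       sr_zero = cl (sr_zero R),
       sr_one = cl (sr_one R) \<rparr>)"

end

theory Submission
  imports Defs
begin

text \<open>
  Coherence means that multiplying by an element of \<open>S\<close> never leaves a class, and the classes
  are determined by the sets \<open>a \<otimes> P\<close> with \<open>P \<subseteq> S\<close>. Consequently the product of the quotient
  can be computed on arbitrary representatives, \<open>[a][b] = {[v] | v \<in> ab}\<close>, and every superring
  axiom of \<open>A\<close>, as well as fullness, transfers to \<open>A/\<^sub>mS\<close> after rescaling representatives by
  suitable elements of \<open>S\<close>. An element equivalent to \<open>0\<close> is annihilated by an element of \<open>S\<close>;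
  in a superdomain with \<open>0 \<notin> S\<close> this forces it to be \<open>0\<close>, so \<open>[a] = [0]\<close> only for \<open>a = 0\<close>,
  and the absence of zero divisors and the existence of inverses pass to the quotient.
\<close>

locale superring_setting =
  fixes A :: "('a, 'b) sr_struct_scheme"
  assumes superring: "superring A"
begin

abbreviation "C \<equiv> sr_carrier A"
abbreviation madd (infixl \<open>\<oplus>\<close> 65) where "a \<oplus> b \<equiv> sr_add A a b"
abbreviation mmul (infixl \<open>\<otimes>\<close> 70) where "a \<otimes> b \<equiv> sr_mul A a b"
abbreviation mneg (\<open>\<ominus> _\<close> [81] 80) where "\<ominus> a \<equiv> sr_neg A a"
abbreviation mzero (\<open>\<zero>\<close>) where "\<zero> \<equiv> sr_zero A"
abbreviation mone (\<open>\<one>\<close>) where "\<one> \<equiv> sr_one A"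
abbreviation set_madd (infixl \<open>\<Oplus>\<close> 65) where "X \<Oplus> Y \<equiv> set_add A X Y"
abbreviation set_mmul (infixl \<open>\<Otimes>\<close> 70) where "X \<Otimes> Y \<equiv> set_mul A X Y"

lemma
  zero_closed: "\<zero> \<in> C" and
  one_closed: "\<one> \<in> C" and
  neg_closed: "a \<in> C \<Longrightarrow> \<ominus> a \<in> C" and
  add_closed: "a \<in> C \<Longrightarrow> b \<in> C \<Longrightarrow> a \<oplus> b \<subseteq> C" and
  mul_closed: "a \<in> C \<Longrightarrow> b \<in> C \<Longrightarrow> a \<otimes> b \<subseteq> C" and
  add_reversible_left: "a \<in> C \<Longrightarrow> b \<in> C \<Longrightarrow> c \<in> C \<Longrightarrow> c \<in> a \<oplus> b \<Longrightarrow> a \<in> c \<oplus> \<ominus> b" and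
  add_reversible_right: "a \<in> C \<Longrightarrow> b \<in> C \<Longrightarrow> c \<in> C \<Longrightarrow> c \<in> a \<oplus> b \<Longrightarrow> b \<in> \<ominus> a \<oplus> c" and
  mem_add_zero_iff: "a \<in> C \<Longrightarrow> b \<in> C \<Longrightarrow> b \<in> a \<oplus> \<zero> \<longleftrightarrow> a = b" and
  add_assoc_subset: "a \<in> C \<Longrightarrow> b \<in> C \<Longrightarrow> c \<in> C \<Longrightarrow> (a \<oplus> b) \<Oplus> {c} \<subseteq> {a} \<Oplus> (b \<oplus> c)" and
  add_commute: "a \<in> C \<Longrightarrow> b \<in> C \<Longrightarrow> a \<oplus> b = b \<oplus> a" and
  mul_assoc_subset: "a \<in> C \<Longrightarrow> b \<in> C \<Longrightarrow> c \<in> C \<Longrightarrow> (a \<otimes> b) \<Otimes> {c} \<subseteq> {a} \<Otimes> (b \<otimes> c)" and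
  mul_commute: "a \<in> C \<Longrightarrow> b \<in> C \<Longrightarrow> a \<otimes> b = b \<otimes> a" and
  mem_one_mul: "a \<in> C \<Longrightarrow> a \<in> \<one> \<otimes> a" and
  mul_zero: "a \<in> C \<Longrightarrow> a \<otimes> \<zero> = {\<zero>}" and
  distrib_subset: "a \<in> C \<Longrightarrow> b \<in> C \<Longrightarrow> c \<in> C \<Longrightarrow> {c} \<Otimes> (a \<oplus> b) \<subseteq> (c \<otimes> a) \<Oplus> (c \<otimes> b)" and
  neg_image_mul: "a \<in> C \<Longrightarrow> b \<in> C \<Longrightarrow> mneg ` (a \<otimes> b) = (\<ominus> a) \<otimes> b" and
  neg_mul_commute: "a \<in> C \<Longrightarrow> b \<in> C \<Longrightarrow> (\<ominus> a) \<otimes> b = a \<otimes> (\<ominus> b)"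
  using superring unfolding superring_def Let_def by - (elim conjE, simp)+

lemma mem_set_mul_iff: "x \<in> X \<Otimes> Y \<longleftrightarrow> (\<exists>a\<in>X. \<exists>b\<in>Y. x \<in> a \<otimes> b)"
  by (auto simp: set_mul_def)

lemma mem_set_add_iff: "x \<in> X \<Oplus> Y \<longleftrightarrow> (\<exists>a\<in>X. \<exists>b\<in>Y. x \<in> a \<oplus> b)"
  by (auto simp: set_add_def)

lemma set_mul_singleton: "{a} \<Otimes> {b} = a \<otimes> b"
  by (simp add: set_mul_def)

lemma mem_mul_closed: "a \<in> C \<Longrightarrow> b \<in> C \<Longrightarrow> x \<in> a \<otimes> b \<Longrightarrow> x \<in> C"
  using mul_closed by blast

lemma mem_add_closed: "a \<in> C \<Longrightarrow> b \<in> C \<Longrightarrow> x \<in> a \<oplus> b \<Longrightarrow> x \<in> C"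
  using add_closed by blast

lemma zero_mul: "a \<in> C \<Longrightarrow> \<zero> \<otimes> a = {\<zero>}"
  using mul_commute mul_zero zero_closed by metis

lemma set_mul_closed: "X \<subseteq> C \<Longrightarrow> Y \<subseteq> C \<Longrightarrow> X \<Otimes> Y \<subseteq> C"
  by (auto simp: mem_set_mul_iff) (meson mem_mul_closed subsetD)

lemma set_mul_commute: "X \<subseteq> C \<Longrightarrow> Y \<subseteq> C \<Longrightarrow> X \<Otimes> Y = Y \<Otimes> X"
  using mul_commute by (auto simp: mem_set_mul_iff) (metis subsetD)+

lemma set_mul_mono: "X \<subseteq> X' \<Longrightarrow> Y \<subseteq> Y' \<Longrightarrow> X \<Otimes> Y \<subseteq> X' \<Otimes> Y'"
  unfolding set_mul_def by blast

text \<open>Commutativity turns the one-sided associativity axiom into an equality.\<close>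

lemma mul_assoc:
  assumes "a \<in> C" "b \<in> C" "c \<in> C"
  shows "(a \<otimes> b) \<Otimes> {c} = {a} \<Otimes> (b \<otimes> c)"
proof
  show "(a \<otimes> b) \<Otimes> {c} \<subseteq> {a} \<Otimes> (b \<otimes> c)"
    using mul_assoc_subset assms by blast
  have "{a} \<Otimes> (b \<otimes> c) = (b \<otimes> c) \<Otimes> {a}"
    by (rule set_mul_commute) (use assms mul_closed in auto)
  also have "\<dots> = (c \<otimes> b) \<Otimes> {a}"
    using mul_commute assms by simp
  also have "\<dots> \<subseteq> {c} \<Otimes> (b \<otimes> a)"
    using mul_assoc_subset assms by blast
  also have "\<dots> = (b \<otimes> a) \<Otimes> {c}"
    by (rule set_mul_commute) (use assms mul_closed in auto)
  also have "\<dots> = (a \<otimes> b) \<Otimes> {c}"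
    using mul_commute assms by simp
  finally show "{a} \<Otimes> (b \<otimes> c) \<subseteq> (a \<otimes> b) \<Otimes> {c}" .
qed

lemma set_mul_assoc:
  assumes "X \<subseteq> C" "Y \<subseteq> C" "Z \<subseteq> C"
  shows "(X \<Otimes> Y) \<Otimes> Z = X \<Otimes> (Y \<Otimes> Z)"
proof (rule set_eqI)
  fix t
  have "t \<in> (X \<Otimes> Y) \<Otimes> Z \<longleftrightarrow> (\<exists>x\<in>X. \<exists>y\<in>Y. \<exists>z\<in>Z. t \<in> (x \<otimes> y) \<Otimes> {z})"
    unfolding set_mul_def by blast
  also have "\<dots> \<longleftrightarrow> (\<exists>x\<in>X. \<exists>y\<in>Y. \<exists>z\<in>Z. t \<in> {x} \<Otimes> (y \<otimes> z))"
    using mul_assoc assms by blast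
  also have "\<dots> \<longleftrightarrow> t \<in> X \<Otimes> (Y \<Otimes> Z)"
    unfolding set_mul_def by blast
  finally show "t \<in> (X \<Otimes> Y) \<Otimes> Z \<longleftrightarrow> t \<in> X \<Otimes> (Y \<Otimes> Z)" .
qed

lemma set_mul_swap_middle:
  assumes "X \<subseteq> C" "Y \<subseteq> C" "Z \<subseteq> C" "W \<subseteq> C"
  shows "(X \<Otimes> Y) \<Otimes> (Z \<Otimes> W) = (X \<Otimes> Z) \<Otimes> (Y \<Otimes> W)"
proof -
  have "(X \<Otimes> Y) \<Otimes> (Z \<Otimes> W) = X \<Otimes> ((Y \<Otimes> Z) \<Otimes> W)"
    using set_mul_assoc set_mul_closed assms by metis
  also have "\<dots> = X \<Otimes> ((Z \<Otimes> Y) \<Otimes> W)"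
    using set_mul_commute assms by metis
  also have "\<dots> = (X \<Otimes> Z) \<Otimes> (Y \<Otimes> W)"
    using set_mul_assoc set_mul_closed assms by metis
  finally show ?thesis .
qed

text \<open>\<open>\<zero> \<in> b \<oplus> \<ominus> b\<close>, so by distributivity \<open>\<zero> \<in> a \<otimes> \<zero>\<close> lies in \<open>(a \<otimes> b) \<Oplus> (a \<otimes> \<ominus> b)\<close>.\<close>

lemma mul_nonempty:
  assumes "a \<in> C" "b \<in> C"
  shows "a \<otimes> b \<noteq> {}"
proof -
  have "b \<in> b \<oplus> \<zero>"
    using mem_add_zero_iff assms zero_closed by blast
  then have "\<zero> \<in> b \<oplus> \<ominus> b"
    using add_reversible_right add_commute assms zero_closed neg_closed by metis
  then have "\<zero> \<in> {a} \<Otimes> (b \<oplus> \<ominus> b)"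
    using mul_zero assms by (auto simp: mem_set_mul_iff)
  then have "\<zero> \<in> (a \<otimes> b) \<Oplus> (a \<otimes> \<ominus> b)"
    using distrib_subset assms neg_closed by blast
  then show ?thesis
    by (auto simp: mem_set_add_iff)
qed

lemma set_mul_nonempty:
  assumes "X \<subseteq> C" "Y \<subseteq> C" "X \<noteq> {}" "Y \<noteq> {}"
  shows "X \<Otimes> Y \<noteq> {}"
proof -
  obtain x y where xy: "x \<in> X" "y \<in> Y"
    using assms by blast
  moreover have "x \<otimes> y \<noteq> {}"
    using mul_nonempty xy assms by blast
  ultimately obtain v where "v \<in> x \<otimes> y"
    by blast
  with xy have "v \<in> X \<Otimes> Y"
    unfolding mem_set_mul_iff by blast
  then show ?thesis
    by blast
qed

lemma neg_image_set_mul: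
  assumes "a \<in> C" "X \<subseteq> C"
  shows "{\<ominus> a} \<Otimes> X = mneg ` ({a} \<Otimes> X)"
proof -
  have "{\<ominus> a} \<Otimes> X = (\<Union>x\<in>X. \<ominus> a \<otimes> x)"
    by (simp add: set_mul_def)
  also have "\<dots> = (\<Union>x\<in>X. mneg ` (a \<otimes> x))"
    using neg_image_mul assms by blast
  also have "\<dots> = mneg ` ({a} \<Otimes> X)"
    by (simp add: set_mul_def image_UN)
  finally show ?thesis .
qed

lemma add_zero:
  assumes "a \<in> C"
  shows "a \<oplus> \<zero> = {a}"
proof -
  have "x \<in> a \<oplus> \<zero> \<longleftrightarrow> x = a" for x
    using mem_add_zero_iff[of a x] mem_add_closed[of a \<zero> x] assms zero_closed by blast
  then show ?thesis
    by blast
qed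

lemma full_distrib:
  "full_superring A \<Longrightarrow> a \<in> C \<Longrightarrow> b \<in> C \<Longrightarrow> c \<in> C \<Longrightarrow> {c} \<Otimes> (a \<oplus> b) = (c \<otimes> a) \<Oplus> (c \<otimes> b)"
  unfolding full_superring_def by blast

lemma mem_mul_add_split:
  assumes "a \<in> C" "b \<in> C" "c \<in> C" "e \<in> a \<oplus> b" "g \<in> c \<otimes> e"
  obtains u v where "u \<in> c \<otimes> a" "v \<in> c \<otimes> b" "g \<in> u \<oplus> v"
proof -
  have "g \<in> {c} \<Otimes> (a \<oplus> b)"
    using assms(4,5) by (auto simp: mem_set_mul_iff)
  also have "\<dots> \<subseteq> (c \<otimes> a) \<Oplus> (c \<otimes> b)"
    using distrib_subset assms(1-3) by blast
  finally show ?thesis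
    using that by (auto simp: mem_set_add_iff)
qed

end

locale marshall_setting = superring_setting +
  fixes S :: "'a set"
  assumes coherent: "marshall_coherent A S"
begin

abbreviation msim_S (infix \<open>\<sim>\<close> 50) where "a \<sim> b \<equiv> msim A S a b"
abbreviation "cl \<equiv> mclass A S"
abbreviation "Q \<equiv> marshall_quotient A S"

lemma
  S_subset_carrier: "S \<subseteq> C" and
  one_in_S: "\<one> \<in> S" and
  set_mul_S_subset: "S \<Otimes> S \<subseteq> S"
  using coherent unfolding marshall_coherent_def by blast+

lemma mem_mul_in_S: "s \<in> S \<Longrightarrow> t \<in> S \<Longrightarrow> u \<in> s \<otimes> t \<Longrightarrow> u \<in> S"
  using set_mul_S_subset unfolding mem_set_mul_iff subset_iff by blast

lemma msimI:
  "a \<in> C \<Longrightarrow> b \<in> C \<Longrightarrow> X \<noteq> {} \<Longrightarrow> Y \<noteq> {} \<Longrightarrow> X \<subseteq> S \<Longrightarrow> Y \<subseteq> S \<Longrightarrow>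
   {a} \<Otimes> X = {b} \<Otimes> Y \<Longrightarrow> a \<sim> b"
  unfolding msim_def by blast

lemma msimE:
  assumes "a \<sim> b"
  obtains X Y where "a \<in> C" "b \<in> C" "X \<noteq> {}" "Y \<noteq> {}" "X \<subseteq> S" "Y \<subseteq> S"
    "{a} \<Otimes> X = {b} \<Otimes> Y"
  using assms unfolding msim_def by blast

lemma msim_carrier: "a \<sim> b \<Longrightarrow> a \<in> C" "a \<sim> b \<Longrightarrow> b \<in> C"
  by (auto elim: msimE)

lemma msim_of_mem_mul:
  assumes "s \<in> S" "a \<in> C" "x \<in> a \<otimes> s"
  shows "x \<sim> a"
proof -
  have "x \<in> C"
    using assms S_subset_carrier mem_mul_closed by blast
  moreover obtain P P' where "P \<subseteq> S" "P' \<subseteq> S" "P \<noteq> {}" "P' \<noteq> {}" "{x} \<Otimes> P = {a} \<Otimes> P'"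
    using coherent assms \<open>x \<in> C\<close> unfolding marshall_coherent_def by blast
  ultimately show ?thesis
    using assms(2) by (intro msimI) auto
qed

lemma msim_refl: "a \<in> C \<Longrightarrow> a \<sim> a"
  using one_in_S by (intro msimI[of a a "{\<one>}" "{\<one>}"]) auto

lemma msim_sym: "a \<sim> b \<Longrightarrow> b \<sim> a"
  unfolding msim_def by blast

lemma msim_trans:
  assumes "a \<sim> b" "b \<sim> c"
  shows "a \<sim> c"
proof -
  obtain X Y where ab: "a \<in> C" "b \<in> C" "X \<noteq> {}" "Y \<noteq> {}" "X \<subseteq> S" "Y \<subseteq> S"
    "{a} \<Otimes> X = {b} \<Otimes> Y"
    using assms(1) by (rule msimE)
  obtain Z W where bc: "c \<in> C" "Z \<noteq> {}" "W \<noteq> {}" "Z \<subseteq> S" "W \<subseteq> S" "{b} \<Otimes> Z = {c} \<Otimes> W"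
    using assms(2) by (rule msimE)
  note in_C = ab(1,2) bc(1) subset_trans[OF ab(5) S_subset_carrier]
    subset_trans[OF ab(6) S_subset_carrier] subset_trans[OF bc(4) S_subset_carrier]
    subset_trans[OF bc(5) S_subset_carrier]
  have "{a} \<Otimes> (X \<Otimes> Z) = ({a} \<Otimes> X) \<Otimes> Z"
    using set_mul_assoc[of "{a}" X Z] in_C by simp
  also have "\<dots> = {b} \<Otimes> (Y \<Otimes> Z)"
    using set_mul_assoc[of "{b}" Y Z] in_C ab(7) by simp
  also have "\<dots> = ({b} \<Otimes> Z) \<Otimes> Y"
    using set_mul_assoc[of "{b}" Z Y] set_mul_commute[of Y Z] in_C by simp
  also have "\<dots> = {c} \<Otimes> (W \<Otimes> Y)"
    using set_mul_assoc[of "{c}" W Y] in_C bc(6) by simp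
  finally have "{a} \<Otimes> (X \<Otimes> Z) = {c} \<Otimes> (W \<Otimes> Y)" .
  moreover have "X \<Otimes> Z \<subseteq> S" "W \<Otimes> Y \<subseteq> S"
    using set_mul_mono[of _ S _ S] set_mul_S_subset ab bc by (meson order_trans)+
  moreover have "X \<Otimes> Z \<noteq> {}" "W \<Otimes> Y \<noteq> {}"
    using set_mul_nonempty in_C ab bc by auto
  ultimately show ?thesis
    using ab(1) bc(1) by (intro msimI) auto
qed

lemma msim_neg:
  assumes "a \<sim> b"
  shows "(\<ominus> a) \<sim> (\<ominus> b)"
proof -
  obtain X Y where ab: "a \<in> C" "b \<in> C" "X \<noteq> {}" "Y \<noteq> {}" "X \<subseteq> S" "Y \<subseteq> S"
    "{a} \<Otimes> X = {b} \<Otimes> Y"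
    using assms by (rule msimE)
  have "{\<ominus> a} \<Otimes> X = {\<ominus> b} \<Otimes> Y"
    using neg_image_set_mul[of a X] neg_image_set_mul[of b Y] ab S_subset_carrier by auto
  then show ?thesis
    using ab neg_closed by (intro msimI) auto
qed

lemma mem_mclass_iff: "x \<in> cl a \<longleftrightarrow> x \<sim> a"
  unfolding mclass_def using msim_carrier by blast

lemma mclass_eq_iff: "a \<in> C \<Longrightarrow> b \<in> C \<Longrightarrow> cl a = cl b \<longleftrightarrow> a \<sim> b"
  unfolding set_eq_iff mem_mclass_iff using msim_refl msim_sym msim_trans by meson

lemma mclass_eqI: "a \<sim> b \<Longrightarrow> cl a = cl b"
  using mclass_eq_iff msim_carrier by blast

lemma mclass_in_image_iff:
  assumes "c \<in> C" "X \<subseteq> C"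
  shows "cl c \<in> cl ` X \<longleftrightarrow> (\<exists>x\<in>X. x \<sim> c)"
  using mclass_eq_iff assms msim_sym by (auto simp: image_iff) (metis subsetD)+

text \<open>The sum \<open>[a] + [b]\<close> of \<open>A/\<^sub>mS\<close>, computed on representatives.\<close>

definition rep_add :: "'a \<Rightarrow> 'a \<Rightarrow> 'a set" where
  "rep_add a b = {c. \<exists>a' b'. a' \<sim> a \<and> b' \<sim> b \<and> c \<in> a' \<oplus> b'}"

lemma mem_rep_addI: "a' \<sim> a \<Longrightarrow> b' \<sim> b \<Longrightarrow> c \<in> a' \<oplus> b' \<Longrightarrow> c \<in> rep_add a b"
  unfolding rep_add_def by blast

lemma mem_rep_addE:
  assumes "c \<in> rep_add a b"
  obtains a' b' where "a' \<sim> a" "b' \<sim> b" "c \<in> a' \<oplus> b'"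
  using assms unfolding rep_add_def by blast

lemma rep_add_closed: "rep_add a b \<subseteq> C"
  using mem_add_closed msim_carrier by (blast elim: mem_rep_addE)

lemma rep_add_commute: "rep_add a b = rep_add b a"
  unfolding rep_add_def using add_commute msim_carrier by blast

lemma
  carrier_marshall_quotient: "sr_carrier Q = cl ` C" and
  zero_marshall_quotient: "sr_zero Q = cl \<zero>" and
  one_marshall_quotient: "sr_one Q = cl \<one>" and
  add_marshall_quotient: "sr_add Q U V = {W \<in> cl ` C. \<exists>a\<in>C. \<exists>b\<in>C. \<exists>c\<in>C.
     U = cl a \<and> V = cl b \<and> W = cl c \<and> (\<exists>a' b' c'. c' \<sim> c \<and> a' \<sim> a \<and> b' \<sim> b \<and> c' \<in> a' \<oplus> b')}" and
  mul_marshall_quotient: "sr_mul Q U V = {W \<in> cl ` C. \<exists>a\<in>C. \<exists>b\<in>C. \<exists>c\<in>C.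
     U = cl a \<and> V = cl b \<and> W = cl c \<and> (\<exists>a' b' c'. c' \<sim> c \<and> a' \<sim> a \<and> b' \<sim> b \<and> c' \<in> a' \<otimes> b')}" and
  neg_marshall_quotient: "sr_neg Q U = cl (\<ominus> (SOME a. a \<in> C \<and> U = cl a))"
  by (simp_all add: marshall_quotient_def Let_def)

lemma neg_mclass:
  assumes "a \<in> C"
  shows "sr_neg Q (cl a) = cl (\<ominus> a)"
proof -
  have "\<exists>x. x \<in> C \<and> cl a = cl x"
    using assms by blast
  then have rep: "(SOME x. x \<in> C \<and> cl a = cl x) \<sim> a"
    using mclass_eq_iff assms msim_sym by (metis (mono_tags, lifting) someI_ex)
  show ?thesis
    unfolding neg_marshall_quotient using mclass_eqI[OF msim_neg[OF rep]] .
qed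

lemma add_mclass:
  assumes "a \<in> C" "b \<in> C"
  shows "sr_add Q (cl a) (cl b) = cl ` rep_add a b"
proof (intro equalityI subsetI)
  fix W
  assume "W \<in> sr_add Q (cl a) (cl b)"
  then obtain a0 b0 c a' b' c' where h: "a0 \<in> C" "b0 \<in> C" "cl a = cl a0" "cl b = cl b0"
    "W = cl c" "c' \<sim> c" "a' \<sim> a0" "b' \<sim> b0" "c' \<in> a' \<oplus> b'"
    unfolding add_marshall_quotient by blast
  then have "a' \<sim> a" "b' \<sim> b"
    using assms mclass_eq_iff msim_trans msim_sym by metis+
  then have "c' \<in> rep_add a b"
    using h(9) by (rule mem_rep_addI)
  moreover have "W = cl c'"
    using h mclass_eqI by simp
  ultimately show "W \<in> cl ` rep_add a b"
    by blast
next
  fix W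
  assume "W \<in> cl ` rep_add a b"
  then obtain c a' b' where "W = cl c" "a' \<sim> a" "b' \<sim> b" "c \<in> a' \<oplus> b'"
    by (blast elim: mem_rep_addE)
  moreover have "c \<in> C"
    using calculation mem_add_closed msim_carrier by blast
  ultimately show "W \<in> sr_add Q (cl a) (cl b)"
    unfolding add_marshall_quotient using assms msim_refl by blast
qed

text \<open>With witnesses \<open>x\<close> of \<open>a' \<sim> a\<close> and \<open>z\<close> of \<open>b' \<sim> b\<close>, an element \<open>t \<in> c' \<otimes> (x \<otimes> z)\<close> lies
  both in \<open>{c'} \<Otimes> S\<close> and in \<open>(a \<otimes> b) \<Otimes> S\<close>, so it links \<open>c'\<close> to some \<open>v \<in> a \<otimes> b\<close>.\<close>

lemma msim_mul_compat:
  assumes "a' \<sim> a" "b' \<sim> b" "c' \<in> a' \<otimes> b'"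
  obtains v where "v \<in> a \<otimes> b" "v \<sim> c'"
proof -
  obtain X Y where a: "a' \<in> C" "a \<in> C" "X \<noteq> {}" "Y \<noteq> {}" "X \<subseteq> S" "Y \<subseteq> S"
    "{a'} \<Otimes> X = {a} \<Otimes> Y"
    using assms(1) by (rule msimE)
  obtain Z W where b: "b' \<in> C" "b \<in> C" "Z \<noteq> {}" "W \<noteq> {}" "Z \<subseteq> S" "W \<subseteq> S"
    "{b'} \<Otimes> Z = {b} \<Otimes> W"
    using assms(2) by (rule msimE)
  have sets_C: "X \<subseteq> C" "Y \<subseteq> C" "Z \<subseteq> C" "W \<subseteq> C"
    using a b S_subset_carrier by auto
  obtain x z where xz: "x \<in> X" "z \<in> Z"
    using a b by blast
  then have xz_C: "x \<in> C" "z \<in> C"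
    using sets_C by auto
  have c'_C: "c' \<in> C"
    using assms(3) a b mem_mul_closed by blast
  obtain s where s: "s \<in> x \<otimes> z"
    using mul_nonempty xz_C by blast
  have s_S: "s \<in> S"
    using mem_mul_in_S[OF _ _ s] xz a(5) b(5) by blast
  obtain t where t: "t \<in> c' \<otimes> s"
    using mul_nonempty c'_C s_S S_subset_carrier by blast
  have "t \<sim> c'"
    using msim_of_mem_mul s_S c'_C t .
  have "t \<in> (a' \<otimes> b') \<Otimes> (x \<otimes> z)"
    using assms(3) s t by (auto simp: mem_set_mul_iff)
  also have "\<dots> = (a' \<otimes> x) \<Otimes> (b' \<otimes> z)"
    using set_mul_swap_middle[of "{a'}" "{b'}" "{x}" "{z}"] a(1) b(1) xz_C
    by (simp add: set_mul_singleton)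
  also have "\<dots> \<subseteq> ({a'} \<Otimes> X) \<Otimes> ({b'} \<Otimes> Z)"
    unfolding set_mul_singleton[symmetric] using xz by (intro set_mul_mono) auto
  also have "\<dots> = (a \<otimes> b) \<Otimes> (Y \<Otimes> W)"
    using set_mul_swap_middle[of "{a}" "{b}" Y W] a(2,7) b(2,7) sets_C
    by (simp add: set_mul_singleton)
  finally obtain v s' where v: "v \<in> a \<otimes> b" "s' \<in> Y \<Otimes> W" "t \<in> v \<otimes> s'"
    by (auto simp: mem_set_mul_iff)
  have "s' \<in> S"
    using v(2) a(6) b(6) set_mul_S_subset set_mul_mono[of Y S W S] by blast
  then have "t \<sim> v"
    using msim_of_mem_mul v(3) mem_mul_closed[OF a(2) b(2) v(1)] by blast
  with \<open>t \<sim> c'\<close> have "v \<sim> c'"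
    using msim_sym msim_trans by blast
  with v(1) show ?thesis
    by (rule that)
qed

lemma mul_mclass:
  assumes "a \<in> C" "b \<in> C"
  shows "sr_mul Q (cl a) (cl b) = cl ` (a \<otimes> b)"
proof (intro equalityI subsetI)
  fix W
  assume "W \<in> sr_mul Q (cl a) (cl b)"
  then obtain a0 b0 c a' b' c' where h: "a0 \<in> C" "b0 \<in> C" "cl a = cl a0" "cl b = cl b0"
    "W = cl c" "c' \<sim> c" "a' \<sim> a0" "b' \<sim> b0" "c' \<in> a' \<otimes> b'"
    unfolding mul_marshall_quotient by blast
  then have "a' \<sim> a" "b' \<sim> b"
    using assms mclass_eq_iff msim_trans msim_sym by metis+
  then obtain v where "v \<in> a \<otimes> b" "v \<sim> c'"
    using h(9) by (rule msim_mul_compat)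
  moreover have "W = cl v"
    using h calculation mclass_eqI msim_trans by metis
  ultimately show "W \<in> cl ` (a \<otimes> b)"
    by blast
next
  fix W
  assume "W \<in> cl ` (a \<otimes> b)"
  then obtain c where "c \<in> a \<otimes> b" "W = cl c"
    by blast
  moreover have "c \<in> C"
    using calculation assms mem_mul_closed by blast
  ultimately show "W \<in> sr_mul Q (cl a) (cl b)"
    unfolding mul_marshall_quotient using assms msim_refl by blast
qed

lemma mclass_mem_add_iff:
  assumes "a \<in> C" "b \<in> C" "c \<in> C"
  shows "cl c \<in> sr_add Q (cl a) (cl b) \<longleftrightarrow> (\<exists>c'\<in>rep_add a b. c' \<sim> c)"
  using add_mclass mclass_in_image_iff rep_add_closed assms by simp

lemma mclass_mem_mul_iff:
  assumes "a \<in> C" "b \<in> C" "c \<in> C"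
  shows "cl c \<in> sr_mul Q (cl a) (cl b) \<longleftrightarrow> (\<exists>c'\<in>a \<otimes> b. c' \<sim> c)"
  using mul_mclass mclass_in_image_iff mul_closed assms by simp

lemma add_mclass_reversible:
  assumes "a \<in> C" "b \<in> C" "c \<in> C" "cl c \<in> sr_add Q (cl a) (cl b)"
  shows "cl a \<in> sr_add Q (cl c) (sr_neg Q (cl b))"
    and "cl b \<in> sr_add Q (sr_neg Q (cl a)) (cl c)"
proof -
  obtain c' where c': "c' \<in> rep_add a b" "c' \<sim> c"
    using assms mclass_mem_add_iff by blast
  obtain a' b' where h: "a' \<sim> a" "b' \<sim> b" "c' \<in> a' \<oplus> b'"
    using c'(1) by (rule mem_rep_addE)
  have in_C: "a' \<in> C" "b' \<in> C" "c' \<in> C"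
    using h c' msim_carrier by auto
  have "a' \<in> rep_add c (\<ominus> b)"
    using add_reversible_left in_C h c' msim_neg by (blast intro: mem_rep_addI)
  then show "cl a \<in> sr_add Q (cl c) (sr_neg Q (cl b))"
    using mclass_mem_add_iff neg_mclass neg_closed assms h(1) by metis
  have "b' \<in> rep_add (\<ominus> a) c"
    using add_reversible_right in_C h c' msim_neg by (blast intro: mem_rep_addI)
  then show "cl b \<in> sr_add Q (sr_neg Q (cl a)) (cl c)"
    using mclass_mem_add_iff neg_mclass neg_closed assms h(2) by metis
qed

text \<open>Since \<open>{\<zero>} \<Otimes> Y = {\<zero>}\<close>, any witness \<open>y \<in> X\<close> of \<open>z \<sim> \<zero>\<close> annihilates \<open>z\<close>.\<close>

lemma msim_zero_annihilated:
  assumes "z \<sim> \<zero>"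
  obtains y where "y \<in> S" "z \<otimes> y = {\<zero>}"
proof -
  obtain X Y where h: "z \<in> C" "X \<noteq> {}" "Y \<noteq> {}" "X \<subseteq> S" "Y \<subseteq> S" "{z} \<Otimes> X = {\<zero>} \<Otimes> Y"
    using assms by (rule msimE)
  have "{\<zero>} \<Otimes> Y = (\<Union>y\<in>Y. {\<zero>})"
    unfolding set_mul_def using zero_mul h(5) S_subset_carrier by auto
  also have "\<dots> = {\<zero>}"
    using h(3) by blast
  finally have prod_zero: "{z} \<Otimes> X = {\<zero>}"
    using h(6) by simp
  obtain y where y: "y \<in> X"
    using h(2) by blast
  then have "z \<otimes> y \<subseteq> {\<zero>}"
    using prod_zero unfolding set_mul_def by blast
  moreover have "z \<otimes> y \<noteq> {}"
    using mul_nonempty h(1,4) y S_subset_carrier by blast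
  ultimately have "z \<otimes> y = {\<zero>}"
    by blast
  with y h(4) show ?thesis
    using that by blast
qed

lemma mclass_mem_add_zero_iff:
  assumes "a \<in> C" "b \<in> C"
  shows "cl b \<in> sr_add Q (cl a) (cl \<zero>) \<longleftrightarrow> cl a = cl b"
proof
  assume "cl a = cl b"
  moreover have "a \<in> rep_add a \<zero>"
    using msim_refl assms zero_closed add_zero by (blast intro: mem_rep_addI)
  ultimately show "cl b \<in> sr_add Q (cl a) (cl \<zero>)"
    using add_mclass[of a \<zero>] assms zero_closed by (metis image_eqI)
next
  assume "cl b \<in> sr_add Q (cl a) (cl \<zero>)"
  then obtain x where x: "x \<in> rep_add a \<zero>" "x \<sim> b"
    using mclass_mem_add_iff assms zero_closed by blast
  obtain a' z where h: "a' \<sim> a" "z \<sim> \<zero>" "x \<in> a' \<oplus> z"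
    using x(1) by (rule mem_rep_addE)
  have in_C: "a' \<in> C" "z \<in> C" "x \<in> C"
    using h x msim_carrier by auto
  obtain y where y: "y \<in> S" "z \<otimes> y = {\<zero>}"
    using h(2) by (rule msim_zero_annihilated)
  have y_C: "y \<in> C"
    using y S_subset_carrier by blast
  obtain u where u: "u \<in> y \<otimes> x"
    using mul_nonempty in_C y_C by blast
  then obtain u' v where "u' \<in> y \<otimes> a'" "v \<in> y \<otimes> z" "u \<in> u' \<oplus> v"
    using mem_mul_add_split in_C y_C h(3) by metis
  then have "u \<in> a' \<otimes> y"
    using y(2) mul_commute in_C y_C add_zero mem_mul_closed by (metis singletonD)
  then have "u \<sim> a'"
    using msim_of_mem_mul y(1) in_C by blast
  moreover have "u \<sim> x"
    using msim_of_mem_mul y(1) in_C u mul_commute y_C by metis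
  ultimately have "a \<sim> b"
    using h(1) x(2) msim_sym msim_trans by meson
  then show "cl a = cl b"
    by (rule mclass_eqI)
qed

text \<open>Rescale \<open>e \<in> d'' \<oplus> c''\<close> by an element of \<open>S\<close> until the representative \<open>d''\<close> becomes a
  multiple of the actual sum \<open>d \<in> a' \<oplus> b'\<close>, then distribute and reassociate in \<open>A\<close>.\<close>

lemma rep_add_assoc:
  assumes "d \<in> rep_add a b" "e \<in> rep_add d c"
  obtains f g where "f \<in> rep_add b c" "g \<in> rep_add a f" "g \<sim> e"
proof -
  obtain a' b' where ab: "a' \<sim> a" "b' \<sim> b" "d \<in> a' \<oplus> b'"
    using assms(1) by (rule mem_rep_addE)
  obtain d'' c'' where dc: "d'' \<sim> d" "c'' \<sim> c" "e \<in> d'' \<oplus> c''"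
    using assms(2) by (rule mem_rep_addE)
  obtain X Y where XY: "X \<subseteq> S" "Y \<noteq> {}" "Y \<subseteq> S" "{d} \<Otimes> X = {d''} \<Otimes> Y"
    using msim_sym[OF dc(1)] by (rule msimE)
  have in_C: "a' \<in> C" "b' \<in> C" "d \<in> C" "d'' \<in> C" "c'' \<in> C" "e \<in> C"
    using ab dc msim_carrier mem_add_closed by meson+
  obtain y where y: "y \<in> Y"
    using XY by blast
  have y_S: "y \<in> S" and y_C: "y \<in> C"
    using y XY S_subset_carrier by auto
  obtain g where g: "g \<in> y \<otimes> e"
    using mul_nonempty in_C y_C by blast
  then obtain u v where uv: "u \<in> y \<otimes> d''" "v \<in> y \<otimes> c''" "g \<in> u \<oplus> v"
    using mem_mul_add_split in_C y_C dc(3) by metis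
  have "u \<in> {d''} \<Otimes> Y"
    using uv(1) y mul_commute in_C y_C by (auto simp: mem_set_mul_iff)
  then have "u \<in> {d} \<Otimes> X"
    using XY(4) by simp
  then obtain x where x: "x \<in> X" "u \<in> d \<otimes> x"
    unfolding mem_set_mul_iff by blast
  have x_S: "x \<in> S" and x_C: "x \<in> C"
    using x XY S_subset_carrier by auto
  obtain p q where pq: "p \<in> x \<otimes> a'" "q \<in> x \<otimes> b'" "u \<in> p \<oplus> q"
    using mem_mul_add_split in_C x_C ab(3) x(2) mul_commute by metis
  have pq_C: "p \<in> C" "q \<in> C" "u \<in> C" "v \<in> C"
    using pq uv in_C x_C y_C mem_mul_closed by meson+
  have "g \<in> (p \<oplus> q) \<Oplus> {v}"
    using pq uv by (auto simp: mem_set_add_iff)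
  also have "\<dots> \<subseteq> {p} \<Oplus> (q \<oplus> v)"
    using add_assoc_subset pq_C by blast
  finally obtain f where f: "f \<in> q \<oplus> v" "g \<in> p \<oplus> f"
    by (auto simp: mem_set_add_iff)
  have sim: "p \<sim> a" "q \<sim> b" "v \<sim> c"
    using msim_of_mem_mul x_S y_S in_C x_C y_C pq uv ab dc mul_commute msim_trans by metis+
  have f_rep: "f \<in> rep_add b c"
    using sim(2,3) f(1) by (rule mem_rep_addI)
  moreover have "g \<in> rep_add a f"
    using sim(1) msim_refl[of f] f_rep rep_add_closed f(2) by (blast intro: mem_rep_addI)
  moreover have "g \<sim> e"
    using msim_of_mem_mul y_S in_C g mul_commute y_C by metis
  ultimately show ?thesis
    by (rule that)
qed

lemma add_mclass_assoc:
  assumes "a \<in> C" "b \<in> C" "c \<in> C"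
  shows "set_add Q (sr_add Q (cl a) (cl b)) {cl c} \<subseteq> set_add Q {cl a} (sr_add Q (cl b) (cl c))"
proof
  fix t
  assume "t \<in> set_add Q (sr_add Q (cl a) (cl b)) {cl c}"
  then obtain D where D: "D \<in> sr_add Q (cl a) (cl b)" "t \<in> sr_add Q D (cl c)"
    unfolding set_add_def by blast
  then obtain d where d: "d \<in> rep_add a b" "D = cl d"
    using add_mclass assms by auto
  have "d \<in> C"
    using d(1) rep_add_closed by blast
  then have "t \<in> cl ` rep_add d c"
    using D(2) d(2) add_mclass assms(3) by simp
  then obtain e where e: "e \<in> rep_add d c" "t = cl e"
    by blast
  obtain f g where fg: "f \<in> rep_add b c" "g \<in> rep_add a f" "g \<sim> e"
    using d(1) e(1) by (rule rep_add_assoc)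
  have "cl f \<in> sr_add Q (cl b) (cl c)"
    using fg add_mclass assms by blast
  moreover have "f \<in> C" "e \<in> C"
    using fg(1) e(1) rep_add_closed by blast+
  then have "t \<in> sr_add Q (cl a) (cl f)"
    using mclass_mem_add_iff assms(1) fg(2,3) e(2) by blast
  ultimately show "t \<in> set_add Q {cl a} (sr_add Q (cl b) (cl c))"
    unfolding set_add_def by blast
qed

lemma mul_mclass_assoc:
  assumes "a \<in> C" "b \<in> C" "c \<in> C"
  shows "set_mul Q (sr_mul Q (cl a) (cl b)) {cl c} \<subseteq> set_mul Q {cl a} (sr_mul Q (cl b) (cl c))"
proof
  fix t
  assume "t \<in> set_mul Q (sr_mul Q (cl a) (cl b)) {cl c}"
  then obtain D where D: "D \<in> sr_mul Q (cl a) (cl b)" "t \<in> sr_mul Q D (cl c)"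
    unfolding set_mul_def by blast
  then obtain d where d: "d \<in> a \<otimes> b" "D = cl d"
    using mul_mclass assms by auto
  have "d \<in> C"
    using d(1) mem_mul_closed assms by blast
  then have "t \<in> cl ` (d \<otimes> c)"
    using D(2) d(2) mul_mclass assms(3) by simp
  then obtain e where e: "e \<in> d \<otimes> c" "t = cl e"
    by blast
  have "e \<in> (a \<otimes> b) \<Otimes> {c}"
    using d e by (auto simp: mem_set_mul_iff)
  then obtain f where f: "f \<in> b \<otimes> c" "e \<in> a \<otimes> f"
    using mul_assoc assms by (auto simp: mem_set_mul_iff)
  have "cl f \<in> sr_mul Q (cl b) (cl c)"
    using f mul_mclass assms by blast
  moreover have "f \<in> C"
    using f(1) mem_mul_closed assms by blast
  then have "t \<in> sr_mul Q (cl a) (cl f)"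
    using f(2) e(2) mul_mclass assms(1) by simp
  ultimately show "t \<in> set_mul Q {cl a} (sr_mul Q (cl b) (cl c))"
    unfolding set_mul_def by blast
qed

lemma mul_mclass_distrib_subset:
  assumes "a \<in> C" "b \<in> C" "c \<in> C"
  shows "set_mul Q {cl c} (sr_add Q (cl a) (cl b))
    \<subseteq> set_add Q (sr_mul Q (cl c) (cl a)) (sr_mul Q (cl c) (cl b))"
proof
  fix t
  assume "t \<in> set_mul Q {cl c} (sr_add Q (cl a) (cl b))"
  then obtain D where D: "D \<in> sr_add Q (cl a) (cl b)" "t \<in> sr_mul Q (cl c) D"
    unfolding set_mul_def by blast
  then obtain d where d: "d \<in> rep_add a b" "D = cl d"
    using add_mclass assms by auto
  have "d \<in> C"
    using d(1) rep_add_closed by blast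
  then have "t \<in> cl ` (c \<otimes> d)"
    using D(2) d(2) mul_mclass assms(3) by simp
  then obtain e where e: "e \<in> c \<otimes> d" "t = cl e"
    by blast
  obtain a' b' where h: "a' \<sim> a" "b' \<sim> b" "d \<in> a' \<oplus> b'"
    using d(1) by (rule mem_rep_addE)
  then have in_C: "a' \<in> C" "b' \<in> C"
    using msim_carrier by auto
  obtain p q where pq: "p \<in> c \<otimes> a'" "q \<in> c \<otimes> b'" "e \<in> p \<oplus> q"
    using mem_mul_add_split in_C assms(3) h(3) e(1) by metis
  have "cl p \<in> sr_mul Q (cl c) (cl a')" "cl q \<in> sr_mul Q (cl c) (cl b')"
    using mul_mclass[OF assms(3)] pq(1,2) in_C by auto
  then have "cl p \<in> sr_mul Q (cl c) (cl a)" "cl q \<in> sr_mul Q (cl c) (cl b)"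
    using mclass_eqI[OF h(1)] mclass_eqI[OF h(2)] by simp_all
  moreover have "t \<in> sr_add Q (cl p) (cl q)"
    using pq e add_mclass mem_mul_closed in_C assms msim_refl
    by (metis image_eqI mem_rep_addI)
  ultimately show "t \<in> set_add Q (sr_mul Q (cl c) (cl a)) (sr_mul Q (cl c) (cl b))"
    unfolding set_add_def by blast
qed

lemma neg_mclass_mul:
  assumes "a \<in> C" "b \<in> C"
  shows "sr_neg Q ` sr_mul Q (cl a) (cl b) = sr_mul Q (sr_neg Q (cl a)) (cl b)"
    and "sr_mul Q (sr_neg Q (cl a)) (cl b) = sr_mul Q (cl a) (sr_neg Q (cl b))"
proof -
  have "sr_neg Q ` sr_mul Q (cl a) (cl b) = sr_neg Q ` cl ` (a \<otimes> b)"
    using mul_mclass assms by simp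
  also have "\<dots> = cl ` mneg ` (a \<otimes> b)"
    unfolding image_image using neg_mclass mem_mul_closed[OF assms] by (intro image_cong) auto
  also have "\<dots> = sr_mul Q (sr_neg Q (cl a)) (cl b)"
    using neg_image_mul mul_mclass neg_mclass neg_closed assms by simp
  finally show "sr_neg Q ` sr_mul Q (cl a) (cl b) = sr_mul Q (sr_neg Q (cl a)) (cl b)" .
  show "sr_mul Q (sr_neg Q (cl a)) (cl b) = sr_mul Q (cl a) (sr_neg Q (cl b))"
    using mul_mclass neg_mclass neg_closed neg_mul_commute assms by simp
qed

theorem superring_marshall_quotient: "superring Q"
  unfolding superring_def Let_def carrier_marshall_quotient zero_marshall_quotient
    one_marshall_quotient ball_simps(9)
  using zero_closed one_closed neg_closed rep_add_closed mul_closed add_mclass_reversible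
    mclass_mem_add_zero_iff add_mclass_assoc rep_add_commute mul_mclass_assoc mul_commute
    mem_one_mul mul_zero mul_mclass_distrib_subset neg_mclass_mul
  by (intro conjI) (simp_all add: neg_mclass add_mclass mul_mclass image_mono)

lemma mem_mul_rescale_witness:
  assumes eq: "{p'} \<Otimes> X = {p} \<Otimes> Y" and "X \<subseteq> S" "Y \<subseteq> S" "p \<in> C" "p' \<in> C"
    and "x \<in> X" "z \<in> S" "t \<in> x \<otimes> z" "u \<in> p' \<otimes> t"
  obtains s where "s \<in> S" "u \<in> p \<otimes> s"
proof -
  have in_C: "X \<subseteq> C" "Y \<subseteq> C" "x \<in> C" "z \<in> C"
    using assms S_subset_carrier by auto
  have "u \<in> {p'} \<Otimes> (x \<otimes> z)"
    using assms(8,9) by (auto simp: mem_set_mul_iff)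
  also have "\<dots> = (p' \<otimes> x) \<Otimes> {z}"
    using mul_assoc[of p' x z] in_C assms(5) by simp
  also have "\<dots> \<subseteq> ({p'} \<Otimes> X) \<Otimes> {z}"
    unfolding set_mul_singleton[symmetric] using assms(6) by (intro set_mul_mono) auto
  also have "\<dots> = {p} \<Otimes> (Y \<Otimes> {z})"
    unfolding eq using set_mul_assoc[of "{p}" Y "{z}"] in_C assms(4) by simp
  finally obtain s where s: "s \<in> Y \<Otimes> {z}" "u \<in> p \<otimes> s"
    by (auto simp: mem_set_mul_iff)
  have "s \<in> S"
    using s(1) assms(3,7) mem_mul_in_S unfolding mem_set_mul_iff by blast
  then show ?thesis
    using s(2) by (rule that)
qed

lemma mem_mul_absorb_S:
  assumes "a \<in> C" "c \<in> C" "s \<in> S" "p \<in> c \<otimes> a" "u \<in> p \<otimes> s"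
  obtains a1 where "a1 \<sim> a" "u \<in> c \<otimes> a1"
proof -
  have "u \<in> (c \<otimes> a) \<Otimes> {s}"
    using assms(4,5) by (auto simp: mem_set_mul_iff)
  also have "\<dots> = {c} \<Otimes> (a \<otimes> s)"
    using mul_assoc assms(1-3) S_subset_carrier by blast
  finally obtain a1 where "a1 \<in> a \<otimes> s" "u \<in> c \<otimes> a1"
    unfolding mem_set_mul_iff by blast
  then show ?thesis
    using msim_of_mem_mul assms(1,3) that by blast
qed

text \<open>A single \<open>t \<in> x \<otimes> z \<subseteq> S\<close> rescales both summands of \<open>e \<in> p' \<oplus> q'\<close> into multiples
  of \<open>c\<close>, and fullness of \<open>A\<close> pulls \<open>c\<close> out.\<close>

lemma rep_add_distrib:
  assumes full: "full_superring A" and "a \<in> C" "b \<in> C" "c \<in> C"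
    and "p \<in> c \<otimes> a" "q \<in> c \<otimes> b" "e \<in> rep_add p q"
  obtains d g where "d \<in> rep_add a b" "g \<in> c \<otimes> d" "g \<sim> e"
proof -
  obtain p' q' where h: "p' \<sim> p" "q' \<sim> q" "e \<in> p' \<oplus> q'"
    using assms(7) by (rule mem_rep_addE)
  obtain X Y where XY: "p' \<in> C" "p \<in> C" "X \<noteq> {}" "X \<subseteq> S" "Y \<subseteq> S" "{p'} \<Otimes> X = {p} \<Otimes> Y"
    using h(1) by (rule msimE)
  obtain Z W where ZW: "q' \<in> C" "q \<in> C" "Z \<noteq> {}" "Z \<subseteq> S" "W \<subseteq> S" "{q'} \<Otimes> Z = {q} \<Otimes> W"
    using h(2) by (rule msimE)
  obtain x z where xz: "x \<in> X" "z \<in> Z"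
    using XY(3) ZW(3) by blast
  have xz_S: "x \<in> S" "z \<in> S"
    using xz XY(4) ZW(4) by auto
  have in_C: "x \<in> C" "z \<in> C" "e \<in> C"
    using xz_S S_subset_carrier mem_add_closed[OF XY(1) ZW(1) h(3)] by auto
  obtain t where t: "t \<in> x \<otimes> z"
    using mul_nonempty in_C by blast
  have t_S: "t \<in> S" and t_C: "t \<in> C"
    using mem_mul_in_S[OF xz_S t] S_subset_carrier by auto
  obtain g where g: "g \<in> t \<otimes> e"
    using mul_nonempty in_C t_C by blast
  obtain u v where uv: "u \<in> t \<otimes> p'" "v \<in> t \<otimes> q'" "g \<in> u \<oplus> v"
    by (rule mem_mul_add_split[OF XY(1) ZW(1) t_C h(3) g])
  have "u \<in> p' \<otimes> t" "v \<in> q' \<otimes> t" "t \<in> z \<otimes> x"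
    using uv t mul_commute XY(1) ZW(1) t_C in_C by simp_all
  obtain s1 where "s1 \<in> S" "u \<in> p \<otimes> s1"
    by (rule mem_mul_rescale_witness[OF XY(6,4,5,2,1) xz(1) xz_S(2) t \<open>u \<in> p' \<otimes> t\<close>])
  then obtain a1 where a1: "a1 \<sim> a" "u \<in> c \<otimes> a1"
    using mem_mul_absorb_S[OF assms(2,4)] assms(5) by blast
  obtain s2 where "s2 \<in> S" "v \<in> q \<otimes> s2"
    by (rule mem_mul_rescale_witness[OF ZW(6,4,5,2,1) xz(2) xz_S(1) \<open>t \<in> z \<otimes> x\<close> \<open>v \<in> q' \<otimes> t\<close>])
  then obtain b1 where b1: "b1 \<sim> b" "v \<in> c \<otimes> b1"
    using mem_mul_absorb_S[OF assms(3,4)] assms(6) by blast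
  have "g \<in> (c \<otimes> a1) \<Oplus> (c \<otimes> b1)"
    using uv(3) a1(2) b1(2) by (auto simp: mem_set_add_iff)
  also have "\<dots> = {c} \<Otimes> (a1 \<oplus> b1)"
    using full_distrib[OF full] assms(4) msim_carrier a1(1) b1(1) by simp
  finally obtain d where d: "d \<in> a1 \<oplus> b1" "g \<in> c \<otimes> d"
    unfolding mem_set_mul_iff by blast
  have "d \<in> rep_add a b"
    using a1(1) b1(1) d(1) by (rule mem_rep_addI)
  moreover have "g \<sim> e"
    using msim_of_mem_mul[OF t_S in_C(3)] g mul_commute in_C(3) t_C by simp
  ultimately show ?thesis
    using d(2) that by blast
qed

lemma mul_mclass_distrib:
  assumes full: "full_superring A" and "a \<in> C" "b \<in> C" "c \<in> C"
  shows "set_mul Q {cl c} (sr_add Q (cl a) (cl b))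
    = set_add Q (sr_mul Q (cl c) (cl a)) (sr_mul Q (cl c) (cl b))"
proof
  show "set_mul Q {cl c} (sr_add Q (cl a) (cl b))
    \<subseteq> set_add Q (sr_mul Q (cl c) (cl a)) (sr_mul Q (cl c) (cl b))"
    using mul_mclass_distrib_subset assms(2-4) .
next
  show "set_add Q (sr_mul Q (cl c) (cl a)) (sr_mul Q (cl c) (cl b))
    \<subseteq> set_mul Q {cl c} (sr_add Q (cl a) (cl b))"
  proof
    fix t
    assume "t \<in> set_add Q (sr_mul Q (cl c) (cl a)) (sr_mul Q (cl c) (cl b))"
    then obtain P R where PR: "P \<in> sr_mul Q (cl c) (cl a)" "R \<in> sr_mul Q (cl c) (cl b)"
      "t \<in> sr_add Q P R"
      unfolding set_add_def by blast
    then obtain p q where pq: "p \<in> c \<otimes> a" "q \<in> c \<otimes> b" "P = cl p" "R = cl q"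
      using mul_mclass assms by auto
    then have "p \<in> C" "q \<in> C"
      using mem_mul_closed assms by blast+
    then obtain e where e: "e \<in> rep_add p q" "t = cl e"
      using PR(3) pq(3,4) add_mclass by auto
    obtain d g where dg: "d \<in> rep_add a b" "g \<in> c \<otimes> d" "g \<sim> e"
      using full assms(2-4) pq(1,2) e(1) by (rule rep_add_distrib)
    have "d \<in> C"
      using dg(1) rep_add_closed by blast
    moreover have "t = cl g"
      using dg(3) e(2) mclass_eqI by simp
    ultimately have "t \<in> sr_mul Q (cl c) (cl d)"
      using dg(2) mul_mclass assms(4) by simp
    moreover have "cl d \<in> sr_add Q (cl a) (cl b)"
      using dg(1) add_mclass assms(2,3) by blast
    ultimately show "t \<in> set_mul Q {cl c} (sr_add Q (cl a) (cl b))"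
      unfolding set_mul_def by blast
  qed
qed

theorem full_superring_marshall_quotient:
  "full_superring A \<Longrightarrow> full_superring Q"
  unfolding full_superring_def[of Q] carrier_marshall_quotient ball_simps(9)
  using superring_marshall_quotient mul_mclass_distrib by blast

lemma msim_zero_eq_zero:
  assumes "superdomain A" "\<zero> \<notin> S" "z \<sim> \<zero>"
  shows "z = \<zero>"
proof -
  obtain y where y: "y \<in> S" "z \<otimes> y = {\<zero>}"
    using assms(3) by (rule msim_zero_annihilated)
  moreover have "z \<in> C" "y \<in> C"
    using assms(3) msim_carrier y(1) S_subset_carrier by auto
  ultimately have "z = \<zero> \<or> y = \<zero>"
    using assms(1) unfolding superdomain_def by blast
  then show ?thesis
    using y(1) assms(2) by blast
qed

lemma mclass_eq_zero_iff:
  "superdomain A \<Longrightarrow> \<zero> \<notin> S \<Longrightarrow> a \<in> C \<Longrightarrow> cl a = cl \<zero> \<longleftrightarrow> a = \<zero>"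
  using mclass_eq_iff zero_closed msim_zero_eq_zero by blast

theorem superdomain_marshall_quotient:
  assumes dom: "superdomain A" and zero_notin: "\<zero> \<notin> S"
  shows "superdomain Q"
proof -
  obtain a where a: "a \<in> C" "a \<noteq> \<zero>"
    using dom zero_closed unfolding superdomain_def by blast
  then have "cl a \<noteq> cl \<zero>"
    using mclass_eq_zero_iff dom zero_notin by blast
  with a(1) have nontrivial: "cl ` C \<noteq> {cl \<zero>}"
    by blast
  have "cl \<zero> \<in> sr_mul Q (cl a) (cl b) \<longleftrightarrow> cl a = cl \<zero> \<or> cl b = cl \<zero>"
    if "a \<in> C" "b \<in> C" for a b
  proof -
    have "cl \<zero> \<in> sr_mul Q (cl a) (cl b) \<longleftrightarrow> (\<exists>v\<in>a \<otimes> b. v \<sim> \<zero>)"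
      using mclass_mem_mul_iff that zero_closed by blast
    also have "\<dots> \<longleftrightarrow> \<zero> \<in> a \<otimes> b"
      using msim_zero_eq_zero dom zero_notin msim_refl zero_closed by blast
    also have "\<dots> \<longleftrightarrow> a = \<zero> \<or> b = \<zero>"
      using dom that unfolding superdomain_def by blast
    also have "\<dots> \<longleftrightarrow> cl a = cl \<zero> \<or> cl b = cl \<zero>"
      using mclass_eq_zero_iff dom zero_notin that by blast
    finally show ?thesis .
  qed
  then show ?thesis
    unfolding superdomain_def[of Q] carrier_marshall_quotient zero_marshall_quotient ball_simps(9)
    using superring_marshall_quotient nontrivial by blast
qed

theorem superfield_marshall_quotient:
  assumes field: "superfield A" and zero_notin: "\<zero> \<notin> S"
  shows "superfield Q"
proof -
  have "\<exists>b\<in>C. cl \<one> \<in> sr_mul Q (cl a) (cl b)" if a: "a \<in> C" "cl a \<noteq> cl \<zero>" for a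
  proof -
    have "a \<noteq> \<zero>"
      using a(2) by blast
    then obtain b where "b \<in> C" "\<one> \<in> a \<otimes> b"
      using field a(1) unfolding superfield_def by blast
    then show ?thesis
      using mul_mclass a(1) by blast
  qed
  moreover have "superdomain A"
    using field unfolding superfield_def by blast
  ultimately show ?thesis
    unfolding superfield_def[of Q] carrier_marshall_quotient zero_marshall_quotient
      one_marshall_quotient ball_simps(9)
    using superdomain_marshall_quotient zero_notin by blast
qed

end

theorem corollary4p6:
  fixes A :: "('a, 'b) sr_struct_scheme" and S :: "'a set"
  assumes "superring A" and "marshall_coherent A S" and "sr_zero A \<notin> S"
  shows "(full_superring A \<longrightarrow> full_superring (marshall_quotient A S)) \<and>
         (superdomain A \<longrightarrow> superdomain (marshall_quotient A S)) \<and>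
         (superfield A \<longrightarrow> superfield (marshall_quotient A S))"
proof -
  interpret marshall_setting A S
    using assms(1,2) by unfold_locales
  show ?thesis
    using full_superring_marshall_quotient superdomain_marshall_quotient
      superfield_marshall_quotient assms(3) by blast
qed

end
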